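(* Assume the composite setting below with (G2). Let $(u_k,\Delta_k)\subset\mathbb{R}^n\times(0,\infty)$ with $u_k\to u$, $\Delta_k\to0$ and $\psi(u_k,\Delta_k)\to0$. Then $0\in\partial f(u)$.
   Context: Composite setting: $J:\mathbb{R}^m\times\mathbb{R}^n\to\mathbb{R}$ continuously differentiable; $S:\mathbb{R}^n\to\mathbb{R}^m$ locally Lipschitz continuous and directionally differentiable (directional derivative $S'(u;h)$); $f(u):=J(S(u),u)$. $\partial_B S(u)$ is the Bouligand subdifferential: all limits $\lim_j S'(u_j)$ with $u_j\to u$ and $S$ differentiable at $u_j$. $\partial f(u)$ is the Clarke subdifferential of $f$. $B_r(x)$ is the closed Euclidean ball. For each $u\in\mathbb{R}^n$, $\Delta>0$ let $\mathcal G(u,\Delta)\subset\mathbb{R}^{m\times n}$ be a nonempty bounded set, and define the model $\phi(u,\Delta;d):=\sup_{G\in\mathcal G(u,\Delta)}\langle G^\top\nabla_yJ(S(u),u)+\nabla_uJ(S(u),u),d\rangle$ and $\psi(u,\Delta):=-\inf_{\|h\|\le1}\phi(u,\Delta;h)$. Conditions: (G1) $\bigcup_{\xi\in B_\Delta(u)}\partial_BS(\xi)\subseteq\mathcal G(u,\Delta)$ for all $u$, $\Delta>0$; (G2) if $(u_k,\Delta_k)\to(u,0)$ with $0\notin\partial f(u)$, then $\sup_{G\in\mathcal G(u_k,\Delta_k)}\inf_{W\in\partial_BS(u)}\|G-W\|\to0$; (D) for all $u,h\in\mathbb{R}^n$ there is $G\in\partial_BS(u)$ with $S'(u;h)=Gh$.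 *)

theory Defs
  imports "HOL-Analysis.Analysis"
begin

definition clarke_dd :: "(real^'n \<Rightarrow> real) \<Rightarrow> real^'n \<Rightarrow> real^'n \<Rightarrow> ereal" where
  "clarke_dd f u h =
     Limsup (at (u, 0) within (UNIV \<times> {0<..}))
            (\<lambda>(y, t). ereal ((f (y + t *\<^sub>R h) - f y) / t))"

definition clarke_subdiff :: "(real^'n \<Rightarrow> real) \<Rightarrow> real^'n \<Rightarrow> (real^'n) set" where
  "clarke_subdiff f u = {g. \<forall>h. ereal (g \<bullet> h) \<le> clarke_dd f u h}"

definition bouligand :: "(real^'n \<Rightarrow> real^'m) \<Rightarrow> real^'n \<Rightarrow> (real^'n^'m) set" where
  "bouligand S u = {W. \<exists>x D. (\<forall>j. (S has_derivative (\<lambda>h. D j *v h)) (at (x j)))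
                              \<and> x \<longlonglongrightarrow> u \<and> D \<longlonglongrightarrow> W}"

definition locally_lipschitz :: "('a::metric_space \<Rightarrow> 'b::metric_space) \<Rightarrow> bool" where
  "locally_lipschitz S \<longleftrightarrow> (\<forall>x. \<exists>e>0. \<exists>L. L-lipschitz_on (ball x e) S)"

definition dir_differentiable :: "(real^'n \<Rightarrow> real^'m) \<Rightarrow> bool" where
  "dir_differentiable S \<longleftrightarrow>
     (\<forall>u h. \<exists>d. ((\<lambda>t. (S (u + t *\<^sub>R h) - S u) /\<^sub>R t) \<longlongrightarrow> d) (at_right 0))"

text \<open>Model phi(u,Delta;d) and psi(u,Delta); gy, gu are the partial gradients of J.\<close>
definition model_phi ::
  "(real^'n \<Rightarrow> real \<Rightarrow> (real^'n^'m) set) \<Rightarrow> (real^'n \<Rightarrow> real^'m)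
   \<Rightarrow> (real^'m \<Rightarrow> real^'n \<Rightarrow> real^'m) \<Rightarrow> (real^'m \<Rightarrow> real^'n \<Rightarrow> real^'n)
   \<Rightarrow> real^'n \<Rightarrow> real \<Rightarrow> real^'n \<Rightarrow> real" where
  "model_phi G S gy gu u \<Delta> d =
     (SUP M\<in>G u \<Delta>. (transpose M *v gy (S u) u + gu (S u) u) \<bullet> d)"

definition model_psi ::
  "(real^'n \<Rightarrow> real \<Rightarrow> (real^'n^'m) set) \<Rightarrow> (real^'n \<Rightarrow> real^'m)
   \<Rightarrow> (real^'m \<Rightarrow> real^'n \<Rightarrow> real^'m) \<Rightarrow> (real^'m \<Rightarrow> real^'n \<Rightarrow> real^'n)
   \<Rightarrow> real^'n \<Rightarrow> real \<Rightarrow> real" where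
  "model_psi G S gy gu u \<Delta> = - (INF h\<in>cball 0 1. model_phi G S gy gu u \<Delta> h)"

end

theory Submission
  imports Defs
begin

text \<open>
  Suppose \<open>0 \<notin> \<partial>f(u)\<close>. Then the Clarke derivative \<open>f\<degree>(u;h)\<close> is negative in some direction, and
  since \<open>\<nabla>\<^sub>yJ \<cdot> W h + \<nabla>\<^sub>uJ \<cdot> h \<le> f\<degree>(u;h)\<close> for every \<open>W \<in> \<partial>\<^sub>BS(u)\<close> (such \<open>W\<close> are limits of
  classical Jacobians, along which the chain rule holds), there are a unit vector \<open>d\<close> and
  \<open>c > 0\<close> with \<open>\<nabla>\<^sub>yJ(S u,u) \<cdot> W d + \<nabla>\<^sub>uJ(S u,u) \<cdot> d \<le> -c\<close> for all \<open>W \<in> \<partial>\<^sub>BS(u)\<close>.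
  By (G2) every matrix of \<open>G(u\<^sub>k,\<Delta>\<^sub>k)\<close> is eventually close to \<open>\<partial>\<^sub>BS(u)\<close>, so
  \<open>\<phi>(u\<^sub>k,\<Delta>\<^sub>k;d) \<le> -c + o(1)\<close> and hence \<open>\<psi>(u\<^sub>k,\<Delta>\<^sub>k) \<ge> c - o(1)\<close>, contradicting \<open>\<psi>(u\<^sub>k,\<Delta>\<^sub>k) \<rightarrow> 0\<close>.

  This needs \<open>\<partial>\<^sub>BS(u)\<close> to be bounded, which follows from the local Lipschitz constant, and
  nonempty, which needs points of differentiability of \<open>S\<close> arbitrarily close to \<open>u\<close>. These come
  from Baire's theorem: for a fixed direction, the points near which the difference quotients of
  \<open>S\<close> are uniformly Cauchy as the step tends to \<open>0\<close> form a dense open set. At a point in all these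
  sets for the directions \<open>\<plusminus>e\<^sub>i\<close>, the one-sided directional derivatives are strict, hence
  \<open>S'(x;-e\<^sub>i) = -S'(x;e\<^sub>i)\<close>, and telescoping along the coordinate axes shows that \<open>S\<close> is
  Frechet differentiable there.
\<close>

lemma norm_matrix_vector_mult_le:
  fixes A :: "real^'n^'m"
  shows "norm (A *v x) \<le> norm A * norm x"
proof -
  have "norm (A *v x) = L2_set (\<lambda>i. \<bar>A $ i \<bullet> x\<bar>) UNIV"
    by (simp add: norm_vec_def matrix_mult_dot)
  also have "\<dots> \<le> L2_set (\<lambda>i. norm (A $ i) * norm x) UNIV"
    by (rule L2_set_mono) (simp_all add: Cauchy_Schwarz_ineq2)
  also have "\<dots> = norm A * norm x"
    by (simp add: L2_set_left_distrib norm_vec_def[of A])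
  finally show ?thesis .
qed

lemma norm_matrix_le_of_bound:
  fixes A :: "real^'n^'m"
  assumes "\<And>h. norm (A *v h) \<le> L * norm h"
  shows "norm A \<le> real CARD('m) * real CARD('n) * L"
proof -
  have "onorm ((*v) A) \<le> L"
    by (rule onorm_le) (rule assms)
  then have "\<bar>A $ i $ j\<bar> \<le> L" for i j
    using matrix_component_le_onorm[of A i j] by linarith
  then have "norm (A $ i) \<le> real CARD('n) * L" for i
    using norm_le_l1_cart[of "A $ i"] sum_bounded_above[of UNIV "\<lambda>j. \<bar>A $ i $ j\<bar>" L] by simp
  then have "(\<Sum>i\<in>UNIV. norm (A $ i)) \<le> real CARD('m) * (real CARD('n) * L)"
    using sum_bounded_above[of UNIV "\<lambda>i. norm (A $ i)"] by simp
  moreover have "norm A \<le> (\<Sum>i\<in>UNIV. norm (A $ i))"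
    unfolding norm_vec_def[of A] by (rule L2_set_le_sum) simp
  ultimately show ?thesis
    by (simp add: mult.assoc)
qed

section \<open>Points of differentiability of directionally differentiable maps\<close>

definition diff_quot :: "('a::real_normed_vector \<Rightarrow> 'b::real_normed_vector) \<Rightarrow> 'a \<Rightarrow> real \<Rightarrow> 'a \<Rightarrow> 'b"
  where "diff_quot S h t x = (S (x + t *\<^sub>R h) - S x) /\<^sub>R t"

definition quot_stable :: "('a::real_normed_vector \<Rightarrow> 'b::real_normed_vector) \<Rightarrow> 'a \<Rightarrow> real \<Rightarrow> 'a set"
  where "quot_stable S h e = {y. \<exists>\<rho>>0. \<exists>\<delta>>0. \<forall>z\<in>ball y \<rho>. \<forall>w\<in>ball y \<rho>. \<forall>s\<in>{0<..\<delta>}. \<forall>t\<in>{0<..\<delta>}.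
     norm (diff_quot S h s z - diff_quot S h t w) \<le> e}"

lemma open_quot_stable: "open (quot_stable S h e)"
  unfolding open_contains_ball
proof
  fix y assume "y \<in> quot_stable S h e"
  then obtain \<rho> \<delta> where "\<rho> > 0" "\<delta> > 0" and osc: "\<forall>z\<in>ball y \<rho>. \<forall>w\<in>ball y \<rho>. \<forall>s\<in>{0<..\<delta>}. \<forall>t\<in>{0<..\<delta>}.
      norm (diff_quot S h s z - diff_quot S h t w) \<le> e"
    unfolding quot_stable_def by blast
  have "ball y (\<rho>/2) \<subseteq> quot_stable S h e"
  proof
    fix x assume "x \<in> ball y (\<rho>/2)"
    then have "ball x (\<rho>/2) \<subseteq> ball y \<rho>"
      by (intro subsetI) (metis dist_commute dist_triangle_half_l mem_ball)
    then show "x \<in> quot_stable S h e"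
      unfolding quot_stable_def using \<open>\<rho> > 0\<close> \<open>\<delta> > 0\<close> osc
      by (intro CollectI exI[of _ "\<rho>/2"] exI[of _ \<delta>]) (auto simp: subset_iff)
  qed
  then show "\<exists>r>0. ball y r \<subseteq> quot_stable S h e"
    using \<open>\<rho> > 0\<close> by (intro exI[of _ "\<rho>/2"]) auto
qed

lemma Baire_closed_cover_ball:
  fixes F :: "nat \<Rightarrow> 'a::{real_normed_vector,heine_borel} set"
  assumes closed: "\<And>N. closed (F N)" and cover: "cball c r \<subseteq> (\<Union>N. F N)" and "r > 0"
  obtains N y \<rho> where "\<rho> > 0" "ball y \<rho> \<subseteq> F N \<inter> ball c r"
proof -
  have "\<exists>N. \<not> cball c r \<subseteq> closure (cball c r - F N)"
  proof (rule ccontr)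
    assume "\<nexists>N. \<not> cball c r \<subseteq> closure (cball c r - F N)"
    then have "cball c r \<subseteq> closure (\<Inter>N. cball c r - F N)"
      by (intro Baire) (auto simp: Diff_eq intro: openin_open_Int closed)
    moreover have "(\<Inter>N. cball c r - F N) = {}"
      using cover \<open>r > 0\<close> by blast
    ultimately show False
      using \<open>r > 0\<close> by (metis closure_empty centre_in_cball empty_iff less_imp_le subsetD)
  qed
  then obtain N x where x: "x \<in> cball c r" and "x \<notin> closure (cball c r - F N)"
    by blast
  then obtain e where "e > 0" and e: "ball x e \<inter> cball c r \<subseteq> F N"
    unfolding closure_approachable by (force simp: dist_commute)
  have "x \<in> closure (ball c r)"
    using x \<open>r > 0\<close> by simp
  then obtain y where "y \<in> ball c r" "dist y x < e"
    unfolding closure_approachable using \<open>e > 0\<close> by blast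
  then obtain \<rho> where "\<rho> > 0" "ball y \<rho> \<subseteq> ball x e \<inter> ball c r"
    using open_contains_ball[of "ball x e \<inter> ball c r"] by (force simp: dist_commute)
  with e show thesis
    using ball_subset_cball by (intro that[of \<rho> y N]) blast+
qed

lemma continuous_on_diff_quot:
  assumes "continuous_on UNIV S"
  shows "continuous_on UNIV (diff_quot S h t)"
  unfolding diff_quot_def
  by (intro continuous_intros continuous_on_compose2[OF assms]) auto

lemma tendsto_at_right_Cauchy:
  fixes g :: "real \<Rightarrow> 'b::metric_space"
  assumes "(g \<longlongrightarrow> d) (at_right 0)" "e > 0"
  obtains N :: nat where
    "\<And>s t. s \<in> {0<..inverse (Suc N)} \<Longrightarrow> t \<in> {0<..inverse (Suc N)} \<Longrightarrow> dist (g s) (g t) \<le> e"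
proof -
  have "\<forall>\<^sub>F t in at_right 0. dist (g t) d < e/2"
    using assms by (intro tendstoD) auto
  then obtain b where "b > 0" and b: "\<And>t. 0 < t \<Longrightarrow> t < b \<Longrightarrow> dist (g t) d < e/2"
    unfolding eventually_at_right_field by auto
  obtain N where "inverse (Suc N) < b"
    using reals_Archimedean[OF \<open>b > 0\<close>] by blast
  show thesis
  proof (rule that[of N])
    fix s t
    assume "s \<in> {0<..inverse (Suc N)}" "t \<in> {0<..inverse (Suc N)}"
    then have "dist (g s) d < e/2" "dist (g t) d < e/2"
      using \<open>inverse (Suc N) < b\<close> b[of s] b[of t] by auto
    then show "dist (g s) (g t) \<le> e"
      using dist_triangle2[of "g s" "g t" d] by linarith
  qed
qed

lemma quot_stable_if_pointwise_Cauchy_on_ball: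
  assumes cont: "continuous_on UNIV S" and "\<rho> > 0" "\<delta> > 0" "e > 0"
    and Cauchy: "\<And>x s t. x \<in> ball y \<rho> \<Longrightarrow> s \<in> {0<..\<delta>} \<Longrightarrow> t \<in> {0<..\<delta>} \<Longrightarrow>
      dist (diff_quot S h s x) (diff_quot S h t x) \<le> e/4"
  shows "y \<in> quot_stable S h e"
proof -
  have "isCont (diff_quot S h \<delta>) y" "e/4 > 0"
    using continuous_on_diff_quot[OF cont] \<open>e > 0\<close> by (auto simp: continuous_on_eq_continuous_at)
  then obtain \<rho>' where "\<rho>' > 0"
    and near: "\<And>z. dist z y < \<rho>' \<Longrightarrow> dist (diff_quot S h \<delta> z) (diff_quot S h \<delta> y) < e/4"
    unfolding continuous_at_eps_delta by blast
  show ?thesis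
    unfolding quot_stable_def
  proof (rule CollectI, rule exI[of _ "min \<rho> \<rho>'"], intro conjI exI[of _ \<delta>] ballI)
    fix z w s t
    assume "z \<in> ball y (min \<rho> \<rho>')" "w \<in> ball y (min \<rho> \<rho>')" and st: "s \<in> {0<..\<delta>}" "t \<in> {0<..\<delta>}"
    then have z: "z \<in> ball y \<rho>" "dist z y < \<rho>'" and w: "w \<in> ball y \<rho>" "dist w y < \<rho>'"
      by (auto simp: dist_commute)
    have \<delta>: "\<delta> \<in> {0<..\<delta>}"
      using \<open>\<delta> > 0\<close> by simp
    \<comment> \<open>pass from step \<open>s\<close> at \<open>z\<close> to step \<open>t\<close> at \<open>w\<close> through the fixed step \<open>\<delta>\<close>, which is continuous in the base point\<close>
    have "dist (diff_quot S h s z) (diff_quot S h t w)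
        \<le> dist (diff_quot S h s z) (diff_quot S h \<delta> z) + dist (diff_quot S h \<delta> z) (diff_quot S h \<delta> y)
          + dist (diff_quot S h \<delta> w) (diff_quot S h \<delta> y) + dist (diff_quot S h \<delta> w) (diff_quot S h t w)"
      using dist_triangle[of "diff_quot S h s z" "diff_quot S h t w" "diff_quot S h \<delta> z"]
        dist_triangle[of "diff_quot S h \<delta> z" "diff_quot S h t w" "diff_quot S h \<delta> y"]
        dist_triangle[of "diff_quot S h \<delta> y" "diff_quot S h t w" "diff_quot S h \<delta> w"]
        dist_commute[of "diff_quot S h \<delta> w" "diff_quot S h \<delta> y"] by linarith
    also have "\<dots> \<le> e/4 + e/4 + e/4 + e/4"
      using Cauchy[OF z(1) st(1) \<delta>] Cauchy[OF w(1) \<delta> st(2)] near[OF z(2)] near[OF w(2)] by linarith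
    finally show "norm (diff_quot S h s z - diff_quot S h t w) \<le> e"
      by (simp add: dist_norm)
  qed (simp_all add: \<open>\<rho> > 0\<close> \<open>\<rho>' > 0\<close> \<open>\<delta> > 0\<close>)
qed

lemma quot_stable_dense:
  fixes S :: "'a::{real_normed_vector,heine_borel} \<Rightarrow> 'b::real_normed_vector"
  assumes cont: "continuous_on UNIV S"
    and conv: "\<And>x. \<exists>d. ((\<lambda>t. diff_quot S h t x) \<longlongrightarrow> d) (at_right 0)"
    and "e > 0" "r > 0"
  shows "ball c r \<inter> quot_stable S h e \<noteq> {}"
proof -
  define F where "F N = (\<Inter>s\<in>{0<..inverse (Suc N)}. \<Inter>t\<in>{0<..inverse (Suc N)}.
    {x. dist (diff_quot S h s x) (diff_quot S h t x) \<le> e/4})" for N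
  have closed: "closed (F N)" for N
    unfolding F_def using continuous_on_diff_quot[OF cont]
    by (intro closed_INT ballI closed_Collect_le continuous_on_dist) auto
  have covered: "cball c r \<subseteq> (\<Union>N. F N)"
  proof
    fix x
    obtain d where "((\<lambda>t. diff_quot S h t x) \<longlongrightarrow> d) (at_right 0)"
      using conv by blast
    then obtain N where "\<And>s t. s \<in> {0<..inverse (Suc N)} \<Longrightarrow> t \<in> {0<..inverse (Suc N)} \<Longrightarrow>
        dist (diff_quot S h s x) (diff_quot S h t x) \<le> e/4"
      by (rule tendsto_at_right_Cauchy[where e = "e/4"]) (use \<open>e > 0\<close> in auto)
    then have "x \<in> F N"
      by (simp add: F_def)
    then show "x \<in> (\<Union>N. F N)"
      by blast
  qed
  obtain N y \<rho> where "\<rho> > 0" and \<rho>: "ball y \<rho> \<subseteq> F N \<inter> ball c r"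
    by (rule Baire_closed_cover_ball[OF closed covered \<open>r > 0\<close>])
  have "dist (diff_quot S h s x) (diff_quot S h t x) \<le> e/4"
    if "x \<in> ball y \<rho>" "s \<in> {0<..inverse (Suc N)}" "t \<in> {0<..inverse (Suc N)}" for x s t
  proof -
    have "x \<in> F N"
      using \<rho> that(1) by blast
    then show ?thesis
      using that(2,3) by (simp add: F_def)
  qed
  then have "y \<in> quot_stable S h e"
    by (intro quot_stable_if_pointwise_Cauchy_on_ball[OF cont \<open>\<rho> > 0\<close> _ \<open>e > 0\<close>, where \<delta> = "inverse (Suc N)"])
      simp_all
  moreover have "y \<in> ball c r"
    using \<rho> \<open>\<rho> > 0\<close> centre_in_ball[of y \<rho>] by blast
  ultimately show ?thesis
    by blast
qed

definition strict_dir_deriv :: "('a::real_normed_vector \<Rightarrow> 'b::real_normed_vector) \<Rightarrow> 'a \<Rightarrow> 'a \<Rightarrow> 'b \<Rightarrow> bool"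
  where "strict_dir_deriv S x h D \<longleftrightarrow>
    (\<forall>e>0. \<forall>\<^sub>F (y, t) in nhds x \<times>\<^sub>F at_right 0. norm (S (y + t *\<^sub>R h) - S y - t *\<^sub>R D) \<le> t * e)"

lemma strict_dir_deriv_if_quot_stable:
  assumes lim: "((\<lambda>t. diff_quot S h t x) \<longlongrightarrow> D) (at_right 0)"
    and stable: "\<And>k::nat. x \<in> quot_stable S h (inverse (Suc k))"
  shows "strict_dir_deriv S x h D"
  unfolding strict_dir_deriv_def
proof (intro allI impI)
  fix e :: real
  assume "e > 0"
  then obtain k where k: "inverse (Suc k) < e"
    using reals_Archimedean by blast
  obtain \<rho> \<delta> where "\<rho> > 0" "\<delta> > 0" and osc: "\<forall>z\<in>ball x \<rho>. \<forall>w\<in>ball x \<rho>. \<forall>s\<in>{0<..\<delta>}. \<forall>t\<in>{0<..\<delta>}.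
      norm (diff_quot S h s z - diff_quot S h t w) \<le> inverse (Suc k)"
    using stable[of k] unfolding quot_stable_def by blast
  have "norm (S (y + t *\<^sub>R h) - S y - t *\<^sub>R D) \<le> t * e" if y: "y \<in> ball x \<rho>" and t: "t \<in> {0<..\<delta>}" for y t
  proof -
    have "\<forall>\<^sub>F s in at_right 0. norm (diff_quot S h s x - diff_quot S h t y) \<le> inverse (Suc k)"
      unfolding eventually_at_right_field using osc y t \<open>\<rho> > 0\<close> \<open>\<delta> > 0\<close> by (intro exI[of _ \<delta>]) auto
    moreover have "((\<lambda>s. diff_quot S h s x - diff_quot S h t y) \<longlongrightarrow> D - diff_quot S h t y) (at_right 0)"
      by (intro tendsto_diff lim tendsto_const)
    ultimately have "norm (D - diff_quot S h t y) \<le> inverse (Suc k)"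
      by (intro Lim_norm_ubound[of "at_right 0"]) auto
    then have "t * norm (diff_quot S h t y - D) \<le> t * e"
      using k t by (simp add: norm_minus_commute)
    moreover have "S (y + t *\<^sub>R h) - S y - t *\<^sub>R D = t *\<^sub>R (diff_quot S h t y - D)"
      using t by (simp add: diff_quot_def algebra_simps)
    ultimately show ?thesis
      using t by simp
  qed
  moreover have "\<forall>\<^sub>F y in nhds x. y \<in> ball x \<rho>"
    using \<open>\<rho> > 0\<close> by (intro eventually_nhds_in_open) auto
  moreover have "\<forall>\<^sub>F t in at_right 0. t \<in> {0<..\<delta>}"
    unfolding eventually_at_right_field using \<open>\<delta> > 0\<close> by (intro exI[of _ \<delta>]) auto
  ultimately show "\<forall>\<^sub>F (y, t) in nhds x \<times>\<^sub>F at_right 0. norm (S (y + t *\<^sub>R h) - S y - t *\<^sub>R D) \<le> t * e"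
    unfolding eventually_prod_filter by blast
qed

lemma filterlim_shifted_pair_at_right:
  fixes x :: "'a::real_normed_vector"
  shows "filterlim (\<lambda>t. (x + t *\<^sub>R v, t)) (nhds x \<times>\<^sub>F at_right 0) (at_right (0::real))"
proof -
  have "((\<lambda>t. x + t *\<^sub>R v) \<longlongrightarrow> x + 0 *\<^sub>R v) (at_right 0)"
    by (intro tendsto_add tendsto_const tendsto_scaleR tendsto_ident_at)
  then show ?thesis
    by (intro filterlim_Pair filterlim_ident) simp
qed

lemma strict_dir_deriv_opposite:
  assumes a: "strict_dir_deriv S x h a" and b: "strict_dir_deriv S x (- h) b"
  shows "b = - a"
proof -
  have bound: "norm (a + b) \<le> 2 * e" if "e > 0" for e
  proof -
    have "\<forall>\<^sub>F t in at_right 0. norm (S (x + t *\<^sub>R h) - S x - t *\<^sub>R a) \<le> t * e"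
      using eventually_compose_filterlim[OF a[unfolded strict_dir_deriv_def, rule_format, OF \<open>e > 0\<close>]
          filterlim_shifted_pair_at_right[of x 0]]
      by simp
    moreover have "\<forall>\<^sub>F t in at_right 0. norm (S x - S (x + t *\<^sub>R h) - t *\<^sub>R b) \<le> t * e"
      using eventually_compose_filterlim[OF b[unfolded strict_dir_deriv_def, rule_format, OF \<open>e > 0\<close>]
          filterlim_shifted_pair_at_right[of x h]]
      by simp
    ultimately have "\<forall>\<^sub>F t in at_right 0. 0 < t \<and> t * norm (a + b) \<le> t * (2 * e)"
      using eventually_at_right_less
    proof eventually_elim
      case (elim t)
      have "t * norm (a + b) = norm (t *\<^sub>R (a + b))"
        using elim(3) by simp
      also have "t *\<^sub>R (a + b) = - ((S (x + t *\<^sub>R h) - S x - t *\<^sub>R a) + (S x - S (x + t *\<^sub>R h) - t *\<^sub>R b))"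
        by (simp add: algebra_simps)
      also have "norm \<dots> \<le> norm (S (x + t *\<^sub>R h) - S x - t *\<^sub>R a) + norm (S x - S (x + t *\<^sub>R h) - t *\<^sub>R b)"
        unfolding norm_minus_cancel by (rule norm_triangle_ineq)
      finally have "t * norm (a + b) \<le> norm (S (x + t *\<^sub>R h) - S x - t *\<^sub>R a) + norm (S x - S (x + t *\<^sub>R h) - t *\<^sub>R b)" .
      then have "t * norm (a + b) \<le> t * (2 * e)"
        using elim(1,2) by linarith
      with elim(3) show ?case
        by blast
    qed
    then have "\<exists>t. 0 < t \<and> t * norm (a + b) \<le> t * (2 * e)"
      by (rule eventually_happens'[OF trivial_limit_at_right_real])
    then obtain t where "0 < t" "t * norm (a + b) \<le> t * (2 * e)"
      by blast
    then show ?thesis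
      by simp
  qed
  have "norm (a + b) \<le> 0 + e" if "e > 0" for e
    using bound[of "e/2"] that by simp
  then have "norm (a + b) = 0"
    using field_le_epsilon[of "norm (a + b)" 0] by simp
  then show ?thesis
    by (simp add: eq_neg_iff_add_eq_0 add.commute)
qed

lemma strict_partials_uniform_step:
  fixes S :: "real^'n \<Rightarrow> 'b::real_normed_vector"
  assumes pos: "\<And>i. strict_dir_deriv S x (axis i 1) (D i)"
    and neg: "\<And>i. strict_dir_deriv S x (- axis i 1) (- D i)"
    and "\<epsilon> > 0"
  obtains \<rho> \<delta> where "\<rho> > 0" "\<delta> > 0"
    "\<And>y c i. y \<in> ball x \<rho> \<Longrightarrow> \<bar>c\<bar> < \<delta> \<Longrightarrow>
       norm (S (y + c *\<^sub>R axis i 1) - S y - c *\<^sub>R D i) \<le> \<epsilon> * \<bar>c\<bar>"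
proof -
  define P where "P i p \<longleftrightarrow>
      norm (S (fst p + snd p *\<^sub>R axis i 1) - S (fst p) - snd p *\<^sub>R D i) \<le> snd p * \<epsilon> \<and>
      norm (S (fst p + snd p *\<^sub>R (- axis i 1)) - S (fst p) - snd p *\<^sub>R (- D i)) \<le> snd p * \<epsilon>" for i p
  have "\<forall>\<^sub>F p in nhds x \<times>\<^sub>F at_right 0. P i p" for i
    using pos[of i, unfolded strict_dir_deriv_def, rule_format, OF \<open>\<epsilon> > 0\<close>]
      neg[of i, unfolded strict_dir_deriv_def, rule_format, OF \<open>\<epsilon> > 0\<close>]
    unfolding P_def by (auto elim: eventually_elim2 simp: case_prod_beta)
  then have "\<forall>\<^sub>F p in nhds x \<times>\<^sub>F at_right 0. \<forall>i. P i p"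
    by (rule eventually_all_finite)
  then obtain Pf Pg where "eventually Pf (nhds x)" "eventually Pg (at_right 0)"
    and PfPg: "\<And>y t. Pf y \<Longrightarrow> Pg t \<Longrightarrow> \<forall>i. P i (y, t)"
    unfolding eventually_prod_filter by blast
  then obtain \<rho> \<delta> where "\<rho> > 0" "\<delta> > 0" and Pf: "\<And>y. dist y x < \<rho> \<Longrightarrow> Pf y"
    and Pg: "\<And>t. 0 < t \<Longrightarrow> t < \<delta> \<Longrightarrow> Pg t"
    unfolding eventually_nhds_metric eventually_at_right_field by auto
  have "norm (S (y + c *\<^sub>R axis i 1) - S y - c *\<^sub>R D i) \<le> \<epsilon> * \<bar>c\<bar>"
    if "y \<in> ball x \<rho>" "\<bar>c\<bar> < \<delta>" for y c i
  proof (cases c "0::real" rule: linorder_cases)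
    case less
    then have "P i (y, - c)"
      using PfPg Pf Pg that by (simp add: dist_commute)
    with less show ?thesis
      by (simp add: P_def mult.commute)
  next
    case greater
    then have "P i (y, c)"
      using PfPg Pf Pg that by (simp add: dist_commute)
    with greater show ?thesis
      by (simp add: P_def mult.commute)
  qed simp
  with \<open>\<rho> > 0\<close> \<open>\<delta> > 0\<close> show thesis
    by (rule that)
qed

lemma telescoping_coordinate_estimate:
  fixes S :: "real^'n \<Rightarrow> 'b::real_normed_vector"
  assumes step: "\<And>y c i. y \<in> ball x \<rho> \<Longrightarrow> \<bar>c\<bar> < \<delta> \<Longrightarrow>
       norm (S (y + c *\<^sub>R axis i 1) - S y - c *\<^sub>R D i) \<le> \<epsilon> * \<bar>c\<bar>"
    and small: "(\<Sum>i\<in>UNIV. \<bar>v $ i\<bar>) < \<rho>" "\<And>i. \<bar>v $ i\<bar> < \<delta>"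
  shows "norm (S (x + (\<Sum>i\<in>I. v $ i *\<^sub>R axis i 1)) - S x - (\<Sum>i\<in>I. v $ i *\<^sub>R D i))
    \<le> \<epsilon> * (\<Sum>i\<in>I. \<bar>v $ i\<bar>)"
proof -
  have "finite I"
    by simp
  then show ?thesis
  proof (induction I rule: finite_induct)
    case (insert j I)
    define p where "p = x + (\<Sum>i\<in>I. v $ i *\<^sub>R axis i 1)"
    have "norm (\<Sum>i\<in>I. v $ i *\<^sub>R axis i (1::real)) \<le> (\<Sum>i\<in>UNIV. \<bar>v $ i\<bar>)"
      using norm_sum[of "\<lambda>i. v $ i *\<^sub>R axis i (1::real)" I] sum_mono2[of UNIV I "\<lambda>i. \<bar>v $ i\<bar>"]
      by simp
    then have "p \<in> ball x \<rho>"
      using small(1) by (simp add: p_def dist_norm)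
    then have "norm (S (p + v $ j *\<^sub>R axis j 1) - S p - v $ j *\<^sub>R D j) \<le> \<epsilon> * \<bar>v $ j\<bar>"
      using small(2) by (rule step)
    moreover have "S (x + (\<Sum>i\<in>insert j I. v $ i *\<^sub>R axis i 1)) - S x - (\<Sum>i\<in>insert j I. v $ i *\<^sub>R D i)
        = (S (p + v $ j *\<^sub>R axis j 1) - S p - v $ j *\<^sub>R D j) + (S p - S x - (\<Sum>i\<in>I. v $ i *\<^sub>R D i))"
      using insert.hyps by (simp add: p_def algebra_simps)
    ultimately have "norm (S (x + (\<Sum>i\<in>insert j I. v $ i *\<^sub>R axis i 1)) - S x - (\<Sum>i\<in>insert j I. v $ i *\<^sub>R D i))
        \<le> \<epsilon> * \<bar>v $ j\<bar> + \<epsilon> * (\<Sum>i\<in>I. \<bar>v $ i\<bar>)"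
      using insert.IH by (auto simp only: p_def intro!: order_trans[OF norm_triangle_ineq] add_mono)
    then show ?case
      using insert.hyps by (simp add: distrib_left)
  qed simp
qed

lemma has_derivative_if_strict_partials:
  fixes S :: "real^'n \<Rightarrow> 'b::real_normed_vector"
  assumes pos: "\<And>i. strict_dir_deriv S x (axis i 1) (D i)"
    and neg: "\<And>i. strict_dir_deriv S x (- axis i 1) (- D i)"
  shows "(S has_derivative (\<lambda>v. \<Sum>i\<in>UNIV. v $ i *\<^sub>R D i)) (at x)"
  unfolding has_derivative_at_alt
proof (intro conjI allI impI)
  show "bounded_linear (\<lambda>v. \<Sum>i\<in>UNIV. v $ i *\<^sub>R D i)"
    by (intro bounded_linear_intros bounded_linear_vec_nth)
  fix e :: real
  assume "e > 0"
  define n where "n = real CARD('n)"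
  have "n > 0"
    by (simp add: n_def)
  obtain \<rho> \<delta> where "\<rho> > 0" "\<delta> > 0" and step: "\<And>y c i. y \<in> ball x \<rho> \<Longrightarrow> \<bar>c\<bar> < \<delta> \<Longrightarrow>
      norm (S (y + c *\<^sub>R axis i 1) - S y - c *\<^sub>R D i) \<le> e / n * \<bar>c\<bar>"
    using strict_partials_uniform_step[OF pos neg, of "e / n"] \<open>e > 0\<close> \<open>n > 0\<close> by auto
  show "\<exists>d>0. \<forall>y. norm (y - x) < d \<longrightarrow>
      norm (S y - S x - (\<Sum>i\<in>UNIV. (y - x) $ i *\<^sub>R D i)) \<le> e * norm (y - x)"
  proof (intro exI[of _ "min (\<rho> / n) \<delta>"] conjI allI impI)
    show "min (\<rho> / n) \<delta> > 0"
      using \<open>\<rho> > 0\<close> \<open>\<delta> > 0\<close> \<open>n > 0\<close> by simp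
    fix y
    assume y: "norm (y - x) < min (\<rho> / n) \<delta>"
    define v where "v = y - x"
    have sum_abs_le: "(\<Sum>i\<in>UNIV. \<bar>v $ i\<bar>) \<le> n * norm v"
      using sum_bounded_above[of UNIV "\<lambda>i. \<bar>v $ i\<bar>" "norm v"] component_le_norm_cart[of v]
      by (simp add: n_def)
    also have "\<dots> < \<rho>"
      using y \<open>n > 0\<close> by (simp add: v_def field_simps)
    finally have "(\<Sum>i\<in>UNIV. \<bar>v $ i\<bar>) < \<rho>" .
    moreover have "\<bar>v $ i\<bar> < \<delta>" for i
      using component_le_norm_cart[of v i] y by (simp add: v_def)
    ultimately have "norm (S (x + (\<Sum>i\<in>UNIV. v $ i *\<^sub>R axis i 1)) - S x - (\<Sum>i\<in>UNIV. v $ i *\<^sub>R D i))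
        \<le> e / n * (\<Sum>i\<in>UNIV. \<bar>v $ i\<bar>)"
      by (intro telescoping_coordinate_estimate[OF step])
    also have "\<dots> \<le> e * norm v"
      using mult_left_mono[OF sum_abs_le, of "e / n"] \<open>e > 0\<close> \<open>n > 0\<close> by simp
    finally show "norm (S y - S x - (\<Sum>i\<in>UNIV. (y - x) $ i *\<^sub>R D i)) \<le> e * norm (y - x)"
      using basis_expansion[of v] by (simp add: v_def scalar_mult_eq_scaleR)
  qed
qed

lemma exists_quot_stable_point:
  fixes S :: "'a::{real_normed_vector,heine_borel} \<Rightarrow> 'b::real_normed_vector"
  assumes cont: "continuous_on UNIV S"
    and conv: "\<And>h y. \<exists>d. ((\<lambda>t. diff_quot S h t y) \<longlongrightarrow> d) (at_right 0)"
    and "countable H" "r > 0"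
  obtains x where "x \<in> ball c r" "\<And>h k. h \<in> H \<Longrightarrow> x \<in> quot_stable S h (inverse (Suc k))"
proof -
  define \<G> where "\<G> = (\<lambda>(k::nat, h). quot_stable S h (inverse (Suc k))) ` (UNIV \<times> H)"
  have "UNIV \<subseteq> closure (\<Inter>\<G>)"
  proof (rule Baire)
    show "countable \<G>"
      unfolding \<G>_def using \<open>countable H\<close> by (intro countable_image countable_SIGMA) simp_all
    fix T
    assume "T \<in> \<G>"
    then obtain k h where T: "T = quot_stable S h (inverse (Suc k))"
      unfolding \<G>_def by auto
    have "y \<in> closure T" for y
      unfolding closure_approachable
    proof (intro allI impI)
      fix e :: real
      assume "e > 0"
      then obtain z where "z \<in> ball y e" "z \<in> T"
    proof -
      have "ball y e \<inter> quot_stable S h (inverse (Suc k)) \<noteq> {}"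
        using \<open>e > 0\<close> by (intro quot_stable_dense[OF cont conv]) simp_all
      then show thesis
        using that unfolding T by blast
    qed
      then show "\<exists>z\<in>T. dist z y < e"
        by (auto simp: dist_commute)
    qed
    then show "openin (top_of_set UNIV) T \<and> UNIV \<subseteq> closure T"
      unfolding T by (auto simp: open_quot_stable)
  qed simp
  then have "c \<in> closure (\<Inter>\<G>)"
    by blast
  then obtain x where "x \<in> \<Inter>\<G>" "dist x c < r"
    unfolding closure_approachable using \<open>r > 0\<close> by blast
  then show thesis
    by (intro that[of x]) (auto simp: \<G>_def dist_commute)
qed

lemma differentiable_point_in_ball:
  fixes S :: "real^'n \<Rightarrow> real^'m"
  assumes cont: "continuous_on UNIV S" and dir: "dir_differentiable S" and "r > 0"
  obtains x A where "x \<in> ball c r" "(S has_derivative (\<lambda>v. A *v v)) (at x)"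
proof -
  have conv: "\<exists>d. ((\<lambda>t. diff_quot S h t y) \<longlongrightarrow> d) (at_right 0)" for h y
    using dir unfolding dir_differentiable_def diff_quot_def by blast
  have "countable (range (\<lambda>i. axis i (1::real)) \<union> range (\<lambda>i. - axis i 1) :: (real^'n) set)"
    by (simp add: countable_finite)
  then obtain x where "x \<in> ball c r"
    and stable: "\<And>h k. h \<in> range (\<lambda>i. axis i 1) \<union> range (\<lambda>i. - axis i 1) \<Longrightarrow>
      x \<in> quot_stable S h (inverse (Suc k))"
    using exists_quot_stable_point[OF cont conv _ \<open>r > 0\<close>] by blast
  have "\<forall>i. \<exists>d. ((\<lambda>t. diff_quot S (axis i 1) t x) \<longlongrightarrow> d) (at_right 0)"
    "\<forall>i. \<exists>d. ((\<lambda>t. diff_quot S (- axis i 1) t x) \<longlongrightarrow> d) (at_right 0)"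
    using conv by blast+
  then obtain Dp Dn where Dp: "\<And>i. ((\<lambda>t. diff_quot S (axis i 1) t x) \<longlongrightarrow> Dp i) (at_right 0)"
    and Dn: "\<And>i. ((\<lambda>t. diff_quot S (- axis i 1) t x) \<longlongrightarrow> Dn i) (at_right 0)"
    by (metis choice)
  have pos: "strict_dir_deriv S x (axis i 1) (Dp i)" for i
    using Dp stable by (rule strict_dir_deriv_if_quot_stable) simp
  have neg': "strict_dir_deriv S x (- axis i 1) (Dn i)" for i
    using Dn stable by (rule strict_dir_deriv_if_quot_stable) simp
  have neg: "strict_dir_deriv S x (- axis i 1) (- Dp i)" for i
    using neg'[of i] strict_dir_deriv_opposite[OF pos neg'] by simp
  have "(\<lambda>v. \<Sum>i\<in>UNIV. v $ i *\<^sub>R Dp i) = (\<lambda>v. (\<chi> k i. Dp i $ k) *v v)"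
    by (simp add: fun_eq_iff vec_eq_iff matrix_vector_mult_def sum_component mult.commute)
  then have "(S has_derivative (\<lambda>v. (\<chi> k i. Dp i $ k) *v v)) (at x)"
    using has_derivative_if_strict_partials[OF pos neg] by simp
  with \<open>x \<in> ball c r\<close> show thesis
    by (rule that)
qed

lemma has_derivative_diff_quot_tendsto:
  fixes S :: "'a::real_normed_vector \<Rightarrow> 'b::real_normed_vector"
  assumes "(S has_derivative f') (at x)"
  shows "((\<lambda>t. diff_quot S h t x) \<longlongrightarrow> f' h) (at_right 0)"
proof (cases "h = 0")
  case True
  then show ?thesis
    using linear_0[OF has_derivative_linear[OF assms]] by (simp add: diff_quot_def)
next
  case False
  have "((\<lambda>y. (S y - S x - f' (y - x)) /\<^sub>R norm (y - x)) \<longlongrightarrow> 0) (at x)"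
    using assms unfolding has_derivative_at_within by simp
  moreover have "((\<lambda>t. x + t *\<^sub>R h) \<longlongrightarrow> x + 0 *\<^sub>R h) (at_right 0)"
    by (intro tendsto_add tendsto_const tendsto_scaleR tendsto_ident_at)
  then have "filterlim (\<lambda>t. x + t *\<^sub>R h) (at x) (at_right 0)"
    unfolding filterlim_at using False eventually_at_right_less[of 0] by (auto elim: eventually_mono)
  ultimately have "((\<lambda>t. (S (x + t *\<^sub>R h) - S x - f' (t *\<^sub>R h)) /\<^sub>R norm (t *\<^sub>R h)) \<longlongrightarrow> 0) (at_right 0)"
    by (auto dest: filterlim_compose)
  then have "((\<lambda>t. norm h *\<^sub>R ((S (x + t *\<^sub>R h) - S x - f' (t *\<^sub>R h)) /\<^sub>R norm (t *\<^sub>R h))) \<longlongrightarrow> norm h *\<^sub>R 0) (at_right 0)"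
    by (intro tendsto_scaleR tendsto_const)
  moreover have "\<forall>\<^sub>F t in at_right 0. norm h *\<^sub>R ((S (x + t *\<^sub>R h) - S x - f' (t *\<^sub>R h)) /\<^sub>R norm (t *\<^sub>R h))
      = diff_quot S h t x - f' h"
    using eventually_at_right_less[of 0]
  proof eventually_elim
    case (elim t)
    have "norm h *\<^sub>R ((S (x + t *\<^sub>R h) - S x - t *\<^sub>R f' h) /\<^sub>R norm (t *\<^sub>R h))
        = (S (x + t *\<^sub>R h) - S x - t *\<^sub>R f' h) /\<^sub>R t"
      using elim False by simp
    then show ?case
      using elim linear_scale[OF has_derivative_linear[OF assms], of t h]
      by (simp add: diff_quot_def scaleR_diff_right)
  qed
  ultimately have "((\<lambda>t. diff_quot S h t x - f' h) \<longlongrightarrow> 0) (at_right 0)"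
    by (simp add: tendsto_cong)
  then show ?thesis
    by (simp add: LIM_zero_iff)
qed

lemma tendsto_matrix_vector_mult:
  fixes D :: "'a \<Rightarrow> real^'n^'m"
  assumes "(D \<longlongrightarrow> W) F"
  shows "((\<lambda>j. D j *v h) \<longlongrightarrow> W *v h) F"
proof -
  have "linear (\<lambda>M::real^'n^'m. M *v h)"
    by (rule linearI) (simp_all add: matrix_vector_mult_add_rdistrib scaleR_matrix_vector_assoc)
  then show ?thesis
    using bounded_linear.tendsto[OF _ assms] by (simp add: linear_conv_bounded_linear)
qed

section \<open>The Bouligand subdifferential\<close>

lemma locally_lipschitz_continuous_on:
  assumes "locally_lipschitz S"
  shows "continuous_on UNIV S"
proof -
  have "isCont S x" for x
  proof -
    obtain e L where "e > 0" "L-lipschitz_on (ball x e) S"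
      using assms unfolding locally_lipschitz_def by blast
    then have "continuous_on (ball x e) S"
      using lipschitz_on_continuous_on by blast
    then show ?thesis
      using \<open>e > 0\<close> by (simp add: continuous_on_eq_continuous_at)
  qed
  then show ?thesis
    by (simp add: continuous_at_imp_continuous_on)
qed

lemma has_derivative_norm_le_lipschitz:
  fixes S :: "'a::real_normed_vector \<Rightarrow> 'b::real_normed_vector"
  assumes "(S has_derivative f') (at x)" "L-lipschitz_on (ball x \<rho>) S" "\<rho> > 0"
  shows "norm (f' h) \<le> L * norm h"
proof (rule Lim_norm_ubound[OF _ has_derivative_diff_quot_tendsto[OF assms(1)]])
  show "\<forall>\<^sub>F t in at_right 0. norm (diff_quot S h t x) \<le> L * norm h"
    unfolding eventually_at_right_field
  proof (intro exI[of _ "\<rho> / (norm h + 1)"] conjI allI impI)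
    show "0 < \<rho> / (norm h + 1)"
      using \<open>\<rho> > 0\<close> by (simp add: add_nonneg_pos)
    fix t :: real
    assume "0 < t" "t < \<rho> / (norm h + 1)"
    then have "t * (norm h + 1) < \<rho>"
      by (simp add: pos_less_divide_eq add_nonneg_pos)
    then have "t * norm h < \<rho>"
      using \<open>0 < t\<close> by (simp add: distrib_left)
    then have "x + t *\<^sub>R h \<in> ball x \<rho>"
      using \<open>0 < t\<close> by (simp add: dist_norm)
    then have "norm (S (x + t *\<^sub>R h) - S x) \<le> L * norm (t *\<^sub>R h)"
      using lipschitz_on_normD[OF assms(2), of "x + t *\<^sub>R h" x] \<open>\<rho> > 0\<close> by simp
    moreover have "norm (diff_quot S h t x) = norm (S (x + t *\<^sub>R h) - S x) / t"
      using \<open>0 < t\<close> by (simp add: diff_quot_def divide_inverse_commute)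
    ultimately show "norm (diff_quot S h t x) \<le> L * norm h"
      using \<open>0 < t\<close> by (simp add: pos_divide_le_eq mult_ac)
  qed
qed simp

lemma locally_lipschitz_derivative_bound:
  fixes S :: "'a::real_normed_vector \<Rightarrow> 'b::real_normed_vector"
  assumes "locally_lipschitz S"
  obtains e L where "e > 0"
    "\<And>y f' h. y \<in> ball u e \<Longrightarrow> (S has_derivative f') (at y) \<Longrightarrow> norm (f' h) \<le> L * norm h"
proof -
  obtain e L where "e > 0" and L: "L-lipschitz_on (ball u e) S"
    using assms unfolding locally_lipschitz_def by blast
  have "norm (f' h) \<le> L * norm h" if "y \<in> ball u (e/2)" "(S has_derivative f') (at y)" for y f' h
  proof -
    have "ball y (e/2) \<subseteq> ball u e"
      using that(1) by (intro subsetI) (metis dist_commute dist_triangle_half_l mem_ball)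
    then have "L-lipschitz_on (ball y (e/2)) S"
      using L lipschitz_on_subset by blast
    then show ?thesis
      using has_derivative_norm_le_lipschitz[OF that(2)] \<open>e > 0\<close> by simp
  qed
  then show thesis
    using \<open>e > 0\<close> by (intro that[of "e/2" L]) auto
qed

lemma bouligand_bounded:
  fixes S :: "real^'n \<Rightarrow> real^'m"
  assumes "locally_lipschitz S"
  obtains L where "\<And>W h. W \<in> bouligand S u \<Longrightarrow> norm (W *v h) \<le> L * norm h"
proof -
  obtain e L where "e > 0" and bound:
    "\<And>y f' h. y \<in> ball u e \<Longrightarrow> (S has_derivative f') (at y) \<Longrightarrow> norm (f' h) \<le> L * norm h"
    using locally_lipschitz_derivative_bound[OF assms] by blast
  have "norm (W *v h) \<le> L * norm h" if W: "W \<in> bouligand S u" for W h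
  proof -
    obtain x D where xD: "\<And>j. (S has_derivative (\<lambda>h. D j *v h)) (at (x j))"
      and "x \<longlonglongrightarrow> u" "D \<longlonglongrightarrow> W"
      using W unfolding bouligand_def by blast
    have "\<forall>\<^sub>F j in sequentially. x j \<in> ball u e"
      using \<open>x \<longlonglongrightarrow> u\<close> \<open>e > 0\<close> by (intro topological_tendstoD) auto
    then have "\<forall>\<^sub>F j in sequentially. norm (D j *v h) \<le> L * norm h"
      by eventually_elim (rule bound[OF _ xD])
    then show ?thesis
      by (intro Lim_norm_ubound[OF _ tendsto_matrix_vector_mult[OF \<open>D \<longlonglongrightarrow> W\<close>]]) simp_all
  qed
  then show thesis
    by (rule that)
qed

lemma bouligand_nonempty:
  fixes S :: "real^'n \<Rightarrow> real^'m"
  assumes lip: "locally_lipschitz S" and dir: "dir_differentiable S"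
  shows "bouligand S u \<noteq> {}"
proof -
  obtain e L where "e > 0" and bound:
    "\<And>y f' h. y \<in> ball u e \<Longrightarrow> (S has_derivative f') (at y) \<Longrightarrow> norm (f' h) \<le> L * norm h"
    using locally_lipschitz_derivative_bound[OF lip] by blast
  have "\<exists>x A. x \<in> ball u (min e (inverse (Suc j))) \<and> (S has_derivative (\<lambda>v. A *v v)) (at x)" for j
  proof -
    have "min e (inverse (Suc j)) > 0"
      using \<open>e > 0\<close> by simp
    then obtain x A where "x \<in> ball u (min e (inverse (Suc j)))" "(S has_derivative (\<lambda>v. A *v v)) (at x)"
      by (rule differentiable_point_in_ball[OF locally_lipschitz_continuous_on[OF lip] dir])
    then show ?thesis
      by blast
  qed
  then obtain x A where x: "\<And>j. x j \<in> ball u (min e (inverse (Suc j)))"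
    and A: "\<And>j. (S has_derivative (\<lambda>v. A j *v v)) (at (x j))"
    by metis
  have "norm (A j) \<le> real CARD('m) * real CARD('n) * L" for j
    using x A by (intro norm_matrix_le_of_bound bound) auto
  then have "\<forall>j. A j \<in> cball 0 (real CARD('m) * real CARD('n) * L)"
    by simp
  then obtain W r where "strict_mono r" "(A \<circ> r) \<longlonglongrightarrow> W"
    using compact_imp_seq_compact[OF compact_cball] unfolding seq_compact_def by blast
  moreover have "x \<longlonglongrightarrow> u"
  proof (rule LIM_zero_cancel, rule Lim_null_comparison)
    show "\<forall>\<^sub>F j in sequentially. norm (x j - u) \<le> inverse (Suc j)"
      using x by (simp add: dist_norm norm_minus_commute less_imp_le)
  qed (rule LIMSEQ_inverse_real_of_nat)
  ultimately have "W \<in> bouligand S u"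
    unfolding bouligand_def using A LIMSEQ_subseq_LIMSEQ
    by (intro CollectI exI[of _ "x \<circ> r"] exI[of _ "A \<circ> r"]) auto
  then show ?thesis
    by blast
qed

section \<open>Clarke directional derivative\<close>

lemma Limsup_mono_filter:
  assumes "F \<le> G"
  shows "Limsup F f \<le> Limsup G f"
  unfolding Limsup_def using assms by (intro INF_superset_mono) (auto simp: le_filter_def)

lemma le_Limsup_of_tendsto_seq:
  fixes f :: "'a \<Rightarrow> 'b::{complete_linorder,linorder_topology}"
  assumes "filterlim z F sequentially" "((\<lambda>j. f (z j)) \<longlongrightarrow> a) sequentially"
  shows "a \<le> Limsup F f"
proof -
  have "a = Limsup sequentially (\<lambda>j. f (z j))"
    using lim_imp_Limsup[OF _ assms(2)] by simp
  also have "\<dots> \<le> Limsup (filtermap z sequentially) f"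
    by (rule Limsup_filtermap_ge)
  also have "\<dots> \<le> Limsup F f"
    using assms(1) unfolding filterlim_def by (rule Limsup_mono_filter)
  finally show ?thesis .
qed

lemma diff_quot_real: "diff_quot f h t x = (f (x + t *\<^sub>R h) - f x) / t"
  for f :: "'a::real_normed_vector \<Rightarrow> real"
  by (simp add: diff_quot_def divide_inverse_commute)

lemma le_clarke_dd_of_derivative_seq:
  fixes f :: "real^'n \<Rightarrow> real"
  assumes deriv: "\<And>j. (f has_derivative f' j) (at (x j))"
    and "x \<longlonglongrightarrow> u" and lim: "(\<lambda>j. f' j h) \<longlonglongrightarrow> a"
  shows "ereal a \<le> clarke_dd f u h"
proof -
  have "\<exists>t. 0 < t \<and> t < inverse (Suc j) \<and> dist (diff_quot f h t (x j)) (f' j h) < inverse (Suc j)" for j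
  proof -
    have "\<forall>\<^sub>F t in at_right 0. 0 < t \<and> t < inverse (Suc j) \<and> dist (diff_quot f h t (x j)) (f' j h) < inverse (Suc j)"
    proof -
      have "\<forall>\<^sub>F t in at_right (0::real). t < inverse (Suc j)"
        unfolding eventually_at_right_field by (intro exI[of _ "inverse (Suc j)"]) simp
      moreover have "\<forall>\<^sub>F t in at_right 0. dist (diff_quot f h t (x j)) (f' j h) < inverse (Suc j)"
        by (rule tendstoD[OF has_derivative_diff_quot_tendsto[OF deriv]]) simp
      ultimately show ?thesis
        using eventually_at_right_less[of 0] by eventually_elim auto
    qed
    then show ?thesis
      using eventually_happens'[OF trivial_limit_at_right_real] by blast
  qed
  then obtain t where t: "\<And>j. 0 < t j" "\<And>j. t j < inverse (Suc j)"
    and close: "\<And>j. dist (diff_quot f h (t j) (x j)) (f' j h) < inverse (Suc j)"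
    by metis
  have "t \<longlonglongrightarrow> 0"
    by (rule Lim_null_comparison[OF _ LIMSEQ_inverse_real_of_nat])
      (use t in \<open>auto intro!: always_eventually less_imp_le simp: abs_of_pos\<close>)
  then have "filterlim (\<lambda>j. (x j, t j)) (at (u, 0) within UNIV \<times> {0<..}) sequentially"
    unfolding filterlim_at using t \<open>x \<longlonglongrightarrow> u\<close>
    by (auto intro!: tendsto_Pair always_eventually simp: less_imp_neq[symmetric])
  moreover have close_lim: "(\<lambda>j. diff_quot f h (t j) (x j) - f' j h) \<longlonglongrightarrow> 0"
    by (rule Lim_null_comparison[OF _ LIMSEQ_inverse_real_of_nat])
      (use close in \<open>auto simp: dist_real_def intro!: always_eventually less_imp_le\<close>)
  then have "(\<lambda>j. diff_quot f h (t j) (x j)) \<longlonglongrightarrow> a"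
    using tendsto_add[OF close_lim lim] by simp
  then have "(\<lambda>j. ereal ((f (x j + t j *\<^sub>R h) - f (x j)) / t j)) \<longlonglongrightarrow> ereal a"
    by (intro tendsto_ereal) (simp add: diff_quot_real)
  ultimately show ?thesis
    unfolding clarke_dd_def
    by (intro le_Limsup_of_tendsto_seq[where z="\<lambda>j. (x j, t j)"]) simp_all
qed

lemma composite_has_derivative:
  assumes J_deriv: "\<And>y v. ((\<lambda>p. J (fst p) (snd p)) has_derivative
      (\<lambda>(h, k). gy y v \<bullet> h + gu y v \<bullet> k)) (at (y, v))"
    and S_deriv: "(S has_derivative S') (at x)"
  shows "((\<lambda>w. J (S w) w) has_derivative (\<lambda>h. gy (S x) x \<bullet> S' h + gu (S x) x \<bullet> h)) (at x)"
proof -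
  have "((\<lambda>w. (S w, w)) has_derivative (\<lambda>h. (S' h, h))) (at x)"
    by (intro has_derivative_Pair S_deriv has_derivative_ident)
  from has_derivative_compose[OF this J_deriv] show ?thesis
    by simp
qed

lemma tendsto_along_graph:
  assumes g_cont: "continuous_on UNIV (\<lambda>p. g (fst p) (snd p))" and S_cont: "continuous_on UNIV S"
    and "(x \<longlongrightarrow> u) F"
  shows "((\<lambda>j. g (S (x j)) (x j)) \<longlongrightarrow> g (S u) u) F"
proof -
  have "((\<lambda>j. (S (x j), x j)) \<longlongrightarrow> (S u, u)) F"
    by (intro tendsto_Pair continuous_on_tendsto_compose[OF S_cont] assms(3)) auto
  from continuous_on_tendsto_compose[OF g_cont this] show ?thesis
    by simp
qed

lemma bouligand_le_clarke_dd:
  fixes J :: "real^'m \<Rightarrow> real^'n \<Rightarrow> real"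
    and gy :: "real^'m \<Rightarrow> real^'n \<Rightarrow> real^'m"
    and gu :: "real^'m \<Rightarrow> real^'n \<Rightarrow> real^'n"
    and S :: "real^'n \<Rightarrow> real^'m"
  assumes J_deriv: "\<And>y v. ((\<lambda>p. J (fst p) (snd p)) has_derivative
      (\<lambda>(h, k). gy y v \<bullet> h + gu y v \<bullet> k)) (at (y, v))"
    and gy_cont: "continuous_on UNIV (\<lambda>p. gy (fst p) (snd p))"
    and gu_cont: "continuous_on UNIV (\<lambda>p. gu (fst p) (snd p))"
    and S_cont: "continuous_on UNIV S"
    and W: "W \<in> bouligand S u"
  shows "ereal (gy (S u) u \<bullet> (W *v h) + gu (S u) u \<bullet> h) \<le> clarke_dd (\<lambda>w. J (S w) w) u h"
proof -
  obtain x D where xD: "\<And>j. (S has_derivative (\<lambda>h. D j *v h)) (at (x j))"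
    and "x \<longlonglongrightarrow> u" "D \<longlonglongrightarrow> W"
    using W unfolding bouligand_def by blast
  have "(\<lambda>j. gy (S (x j)) (x j) \<bullet> (D j *v h) + gu (S (x j)) (x j) \<bullet> h)
      \<longlonglongrightarrow> gy (S u) u \<bullet> (W *v h) + gu (S u) u \<bullet> h"
    by (intro tendsto_add tendsto_inner tendsto_matrix_vector_mult \<open>D \<longlonglongrightarrow> W\<close> tendsto_const
        tendsto_along_graph[OF gy_cont S_cont \<open>x \<longlonglongrightarrow> u\<close>] tendsto_along_graph[OF gu_cont S_cont \<open>x \<longlonglongrightarrow> u\<close>])
  with composite_has_derivative[OF J_deriv xD] \<open>x \<longlonglongrightarrow> u\<close> show ?thesis
    by (rule le_clarke_dd_of_derivative_seq)
qed

section \<open>The stationarity measure\<close>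

lemma clarke_descent_direction:
  fixes f :: "real^'n \<Rightarrow> real" and B :: "(real^'n^'m) set"
  assumes "0 \<notin> clarke_subdiff f u" and "B \<noteq> {}"
    and le: "\<And>W h. W \<in> B \<Longrightarrow> ereal (p \<bullet> (W *v h) + q \<bullet> h) \<le> clarke_dd f u h"
  obtains d c where "norm d = 1" "c > 0" "\<And>W. W \<in> B \<Longrightarrow> p \<bullet> (W *v d) + q \<bullet> d \<le> - c"
proof -
  obtain h where "clarke_dd f u h < 0"
    using assms(1) unfolding clarke_subdiff_def by (auto simp: not_le zero_ereal_def)
  then obtain z where z: "clarke_dd f u h < ereal z" "z < 0"
    by (metis ereal_dense2 ereal_less(2) less_ereal.simps(1) zero_ereal_def)
  have val: "p \<bullet> (W *v h) + q \<bullet> h < z" if "W \<in> B" for W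
  proof -
    have "ereal (p \<bullet> (W *v h) + q \<bullet> h) < ereal z"
      using le[OF that] z(1) by (rule le_less_trans)
    then show ?thesis
      by simp
  qed
  have "h \<noteq> 0"
    using val \<open>B \<noteq> {}\<close> z(2) by fastforce
  show thesis
  proof (rule that[of "h /\<^sub>R norm h" "- z / norm h"])
    fix W
    assume "W \<in> B"
    have "p \<bullet> (W *v (h /\<^sub>R norm h)) + q \<bullet> (h /\<^sub>R norm h) = (p \<bullet> (W *v h) + q \<bullet> h) / norm h"
      by (simp add: matrix_vector_mult_scaleR divide_inverse_commute distrib_left)
    also have "\<dots> \<le> - (- z / norm h)"
      using val[OF \<open>W \<in> B\<close>] \<open>h \<noteq> 0\<close> by (simp add: divide_right_mono less_imp_le)
    finally show "p \<bullet> (W *v (h /\<^sub>R norm h)) + q \<bullet> (h /\<^sub>R norm h) \<le> - (- z / norm h)" .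
  qed (use z(2) \<open>h \<noteq> 0\<close> in \<open>auto simp: divide_neg_pos\<close>)
qed

lemma model_value_eq: "(transpose M *v p + q) \<bullet> d = p \<bullet> (M *v d) + q \<bullet> d"
  for M :: "real^'n^'m"
  by (simp add: inner_add_left dot_lmul_matrix)

lemma exists_dist_less_infdist:
  assumes "A \<noteq> {}" "e > 0"
  obtains a where "a \<in> A" "dist x a < infdist x A + e"
proof -
  have "Inf ((\<lambda>a. dist x a) ` A) < infdist x A + e"
    using assms by (simp add: infdist_notempty)
  then show thesis
    using cInf_lessD[of "(\<lambda>a. dist x a) ` A"] assms(1) that by blast
qed

lemma model_value_le_infdist:
  fixes B :: "(real^'n^'m) set"
  assumes "B \<noteq> {}" and W_bound: "\<And>W. W \<in> B \<Longrightarrow> norm (W *v d) \<le> L"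
    and descent: "\<And>W. W \<in> B \<Longrightarrow> p0 \<bullet> (W *v d) + q0 \<bullet> d \<le> - c"
    and "norm d = 1"
  shows "(transpose M *v p + q) \<bullet> d \<le> - c + norm (p - p0) * L + norm p * infdist M B + norm (q - q0)"
proof -
  define K where "K = - c + norm (p - p0) * L + norm (q - q0)"
  have near: "(transpose M *v p + q) \<bullet> d \<le> K + norm p * norm (M - W)" if "W \<in> B" for W
  proof -
    have "(transpose M *v p + q) \<bullet> d
        = (p0 \<bullet> (W *v d) + q0 \<bullet> d) + (p - p0) \<bullet> (W *v d) + p \<bullet> ((M - W) *v d) + (q - q0) \<bullet> d"
      unfolding model_value_eq by (simp add: matrix_vector_mult_diff_rdistrib inner_diff_left inner_diff_right)
    moreover have "(p - p0) \<bullet> (W *v d) \<le> norm (p - p0) * L"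
      using norm_cauchy_schwarz[of "p - p0" "W *v d"] mult_left_mono[OF W_bound[OF that] norm_ge_zero]
      by (rule order_trans)
    moreover have "p \<bullet> ((M - W) *v d) \<le> norm p * norm (M - W)"
      using norm_cauchy_schwarz[of p "(M - W) *v d"]
        mult_left_mono[OF norm_matrix_vector_mult_le[of "M - W" d] norm_ge_zero, of p] \<open>norm d = 1\<close>
      by simp
    moreover have "(q - q0) \<bullet> d \<le> norm (q - q0)"
      using norm_cauchy_schwarz[of "q - q0" d] \<open>norm d = 1\<close> by simp
    ultimately show ?thesis
      using descent[OF that] by (simp add: K_def)
  qed
  have "(transpose M *v p + q) \<bullet> d \<le> K + norm p * infdist M B + e" if "e > 0" for e
  proof -
    have "e / (norm p + 1) > 0"
      using \<open>e > 0\<close> by (simp add: add_nonneg_pos)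
    then obtain W where "W \<in> B" "dist M W < infdist M B + e / (norm p + 1)"
      by (rule exists_dist_less_infdist[OF \<open>B \<noteq> {}\<close>])
    then have "norm p * norm (M - W) \<le> norm p * (infdist M B + e / (norm p + 1))"
      by (simp add: dist_norm mult_left_mono)
    also have "\<dots> = norm p * infdist M B + norm p * (e / (norm p + 1))"
      by (rule distrib_left)
    also have "norm p * (e / (norm p + 1)) \<le> e"
      using \<open>e > 0\<close> by (simp add: field_simps add_pos_nonneg)
    finally show ?thesis
      using near[OF \<open>W \<in> B\<close>] by linarith
  qed
  then have "(transpose M *v p + q) \<bullet> d \<le> K + norm p * infdist M B"
    by (rule field_le_epsilon)
  then show ?thesis
    by (simp add: K_def)
qed

lemma neg_model_phi_le_model_psi:
  assumes G_ne: "G v \<Delta> \<noteq> {}" and G_bdd: "bounded (G v \<Delta>)" and "norm d \<le> 1"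
  shows "- model_phi G S gy gu v \<Delta> d \<le> model_psi G S gy gu v \<Delta>"
proof -
  define p where "p = gy (S v) v"
  define q where "q = gu (S v) v"
  obtain R where R: "\<And>M. M \<in> G v \<Delta> \<Longrightarrow> norm M \<le> R"
    using G_bdd unfolding bounded_iff by blast
  have val_abs: "\<bar>(transpose M *v p + q) \<bullet> h\<bar> \<le> (norm p * R + norm q) * norm h" if "M \<in> G v \<Delta>" for M h
  proof -
    have "\<bar>p \<bullet> (M *v h)\<bar> \<le> norm p * (R * norm h)"
      using Cauchy_Schwarz_ineq2[of p "M *v h"] norm_matrix_vector_mult_le[of M h]
        mult_right_mono[OF R[OF that] norm_ge_zero, of h]
      by (meson mult_left_mono norm_ge_zero order_trans)
    then show ?thesis
      unfolding model_value_eq using Cauchy_Schwarz_ineq2[of q h]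
      by (simp add: algebra_simps order_trans[OF abs_triangle_ineq])
  qed
  have bdd: "bdd_above ((\<lambda>M. (transpose M *v p + q) \<bullet> h) ` G v \<Delta>)" for h
    using val_abs by (intro bdd_aboveI2[of _ _ "(norm p * R + norm q) * norm h"]) (simp add: abs_le_iff)
  obtain M0 where "M0 \<in> G v \<Delta>"
    using G_ne by blast
  have "R \<ge> 0"
    using R[OF \<open>M0 \<in> G v \<Delta>\<close>] norm_ge_zero order_trans by blast
  have "- (norm p * R + norm q) \<le> model_phi G S gy gu v \<Delta> h" if "h \<in> cball 0 1" for h
  proof -
    have "(norm p * R + norm q) * norm h \<le> norm p * R + norm q"
      using that \<open>R \<ge> 0\<close> by (intro mult_left_le) auto
    moreover have "(transpose M0 *v p + q) \<bullet> h \<le> model_phi G S gy gu v \<Delta> h"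
      unfolding model_phi_def p_def[symmetric] q_def[symmetric] by (rule cSUP_upper[OF \<open>M0 \<in> G v \<Delta>\<close> bdd])
    ultimately show ?thesis
      using val_abs[OF \<open>M0 \<in> G v \<Delta>\<close>, of h] by linarith
  qed
  then have "bdd_below ((\<lambda>h. model_phi G S gy gu v \<Delta> h) ` cball 0 1)"
    by (rule bdd_belowI2)
  then have "(INF h\<in>cball 0 1. model_phi G S gy gu v \<Delta> h) \<le> model_phi G S gy gu v \<Delta> d"
    by (rule cINF_lower) (simp add: \<open>norm d \<le> 1\<close>)
  then show ?thesis
    unfolding model_psi_def by linarith
qed

lemma model_psi_lower_bound:
  fixes G :: "real^'n \<Rightarrow> real \<Rightarrow> (real^'n^'m) set" and B :: "(real^'n^'m) set"
  assumes G_ne: "G v \<Delta> \<noteq> {}" and G_bdd: "bounded (G v \<Delta>)" and "B \<noteq> {}"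
    and W_bound: "\<And>W. W \<in> B \<Longrightarrow> norm (W *v d) \<le> L"
    and descent: "\<And>W. W \<in> B \<Longrightarrow> p0 \<bullet> (W *v d) + q0 \<bullet> d \<le> - c"
    and "norm d = 1"
  shows "c - (norm (gy (S v) v - p0) * L + norm (gy (S v) v) * (SUP M\<in>G v \<Delta>. infdist M B)
      + norm (gu (S v) v - q0)) \<le> model_psi G S gy gu v \<Delta>"
proof -
  obtain R where R: "\<And>M. M \<in> G v \<Delta> \<Longrightarrow> norm M \<le> R"
    using G_bdd unfolding bounded_iff by blast
  obtain W0 where "W0 \<in> B"
    using \<open>B \<noteq> {}\<close> by blast
  have "infdist M B \<le> R + norm W0" if "M \<in> G v \<Delta>" for M
    using infdist_le[OF \<open>W0 \<in> B\<close>, of M] norm_triangle_ineq4[of M W0] R[OF that]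
    by (simp add: dist_norm)
  then have bdd: "bdd_above ((\<lambda>M. infdist M B) ` G v \<Delta>)"
    by (rule bdd_aboveI2)
  have "model_phi G S gy gu v \<Delta> d \<le> - c + norm (gy (S v) v - p0) * L
      + norm (gy (S v) v) * (SUP M\<in>G v \<Delta>. infdist M B) + norm (gu (S v) v - q0)"
    unfolding model_phi_def
  proof (rule cSUP_least[OF G_ne])
    fix M
    assume "M \<in> G v \<Delta>"
    have "norm (gy (S v) v) * infdist M B \<le> norm (gy (S v) v) * (SUP M\<in>G v \<Delta>. infdist M B)"
      by (intro mult_left_mono cSUP_upper[OF \<open>M \<in> G v \<Delta>\<close> bdd]) simp
    then show "(transpose M *v gy (S v) v + gu (S v) v) \<bullet> d \<le> - c + norm (gy (S v) v - p0) * L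
        + norm (gy (S v) v) * (SUP M\<in>G v \<Delta>. infdist M B) + norm (gu (S v) v - q0)"
      using model_value_le_infdist[OF \<open>B \<noteq> {}\<close> W_bound descent \<open>norm d = 1\<close>, of M "gy (S v) v" "gu (S v) v"]
      by linarith
  qed
  then show ?thesis
    using neg_model_phi_le_model_psi[where G = G and v = v and \<Delta> = \<Delta> and d = d and S = S and gy = gy and gu = gu,
        OF G_ne G_bdd]
      \<open>norm d = 1\<close> by linarith
qed

lemma model_psi_limit_ge:
  fixes G :: "real^'n \<Rightarrow> real \<Rightarrow> (real^'n^'m) set" and B :: "(real^'n^'m) set"
  assumes gy_cont: "continuous_on UNIV (\<lambda>p. gy (fst p) (snd p))"
    and gu_cont: "continuous_on UNIV (\<lambda>p. gu (fst p) (snd p))"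
    and S_cont: "continuous_on UNIV S"
    and G_ne: "\<And>k. G (uk k) (\<Delta>k k) \<noteq> {}" and G_bdd: "\<And>k. bounded (G (uk k) (\<Delta>k k))"
    and "B \<noteq> {}" and W_bound: "\<And>W. W \<in> B \<Longrightarrow> norm (W *v d) \<le> L"
    and descent: "\<And>W. W \<in> B \<Longrightarrow> gy (S u) u \<bullet> (W *v d) + gu (S u) u \<bullet> d \<le> - c"
    and "norm d = 1" and "uk \<longlonglongrightarrow> u"
    and dist_lim: "(\<lambda>k. SUP M\<in>G (uk k) (\<Delta>k k). infdist M B) \<longlonglongrightarrow> 0"
    and psi_lim: "(\<lambda>k. model_psi G S gy gu (uk k) (\<Delta>k k)) \<longlonglongrightarrow> \<psi>"
  shows "c \<le> \<psi>"
proof -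
  define e where "e k = norm (gy (S (uk k)) (uk k) - gy (S u) u) * L
      + norm (gy (S (uk k)) (uk k)) * (SUP M\<in>G (uk k) (\<Delta>k k). infdist M B)
      + norm (gu (S (uk k)) (uk k) - gu (S u) u)" for k
  have lower: "c - e k \<le> model_psi G S gy gu (uk k) (\<Delta>k k)" for k
    unfolding e_def using \<open>B \<noteq> {}\<close> W_bound descent \<open>norm d = 1\<close>
    by (rule model_psi_lower_bound[where G = G and v = "uk k" and \<Delta> = "\<Delta>k k", OF G_ne G_bdd])
  have gy_lim: "(\<lambda>k. gy (S (uk k)) (uk k)) \<longlonglongrightarrow> gy (S u) u"
    and gu_lim: "(\<lambda>k. gu (S (uk k)) (uk k)) \<longlonglongrightarrow> gu (S u) u"
    using tendsto_along_graph[OF gy_cont S_cont \<open>uk \<longlonglongrightarrow> u\<close>] tendsto_along_graph[OF gu_cont S_cont \<open>uk \<longlonglongrightarrow> u\<close>] .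
  then have "(\<lambda>k. norm (gy (S (uk k)) (uk k) - gy (S u) u)) \<longlonglongrightarrow> 0"
    "(\<lambda>k. norm (gu (S (uk k)) (uk k) - gu (S u) u)) \<longlonglongrightarrow> 0"
    by (simp_all add: tendsto_norm_zero_iff LIM_zero_iff)
  with dist_lim have "e \<longlonglongrightarrow> 0 * L + norm (gy (S u) u) * 0 + 0"
    unfolding e_def by (intro tendsto_add tendsto_mult tendsto_norm tendsto_const gy_lim)
  then have "c - 0 \<le> \<psi>"
    using lower by (intro tendsto_le[OF _ psi_lim tendsto_diff[OF tendsto_const]] always_eventually allI) simp_all
  then show ?thesis
    by simp
qed

theorem lemma3p4:
  fixes J :: "real^'m \<Rightarrow> real^'n \<Rightarrow> real"
    and gy :: "real^'m \<Rightarrow> real^'n \<Rightarrow> real^'m"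
    and gu :: "real^'m \<Rightarrow> real^'n \<Rightarrow> real^'n"
    and S :: "real^'n \<Rightarrow> real^'m"
    and G :: "real^'n \<Rightarrow> real \<Rightarrow> (real^'n^'m) set"
    and uk :: "nat \<Rightarrow> real^'n" and \<Delta>k :: "nat \<Rightarrow> real" and u :: "real^'n"
  assumes J_deriv: "\<And>y v. ((\<lambda>p. J (fst p) (snd p)) has_derivative
                        (\<lambda>(h, k). gy y v \<bullet> h + gu y v \<bullet> k)) (at (y, v))"
    and gy_cont: "continuous_on UNIV (\<lambda>p. gy (fst p) (snd p))"
    and gu_cont: "continuous_on UNIV (\<lambda>p. gu (fst p) (snd p))"
    and S_lip: "locally_lipschitz S"
    and S_dir: "dir_differentiable S"
    and G_ne: "\<And>v \<Delta>. \<Delta> > 0 \<Longrightarrow> G v \<Delta> \<noteq> {}"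
    and G_bdd: "\<And>v \<Delta>. \<Delta> > 0 \<Longrightarrow> bounded (G v \<Delta>)"
    and G2: "\<And>vk \<delta>k v. (\<forall>k. \<delta>k k > 0) \<Longrightarrow> vk \<longlonglongrightarrow> v \<Longrightarrow> \<delta>k \<longlonglongrightarrow> 0 \<Longrightarrow>
               0 \<notin> clarke_subdiff (\<lambda>w. J (S w) w) v \<Longrightarrow>
               (\<lambda>k. SUP M\<in>G (vk k) (\<delta>k k). INF W\<in>bouligand S v. norm (M - W)) \<longlonglongrightarrow> 0"
    and uk_pos: "\<forall>k. \<Delta>k k > 0"
    and uk_lim: "uk \<longlonglongrightarrow> u"
    and \<Delta>k_lim: "\<Delta>k \<longlonglongrightarrow> 0"
    and psi_lim: "(\<lambda>k. model_psi G S gy gu (uk k) (\<Delta>k k)) \<longlonglongrightarrow> 0"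
  shows "0 \<in> clarke_subdiff (\<lambda>w. J (S w) w) u"
proof (rule ccontr)
  assume not_stationary: "0 \<notin> clarke_subdiff (\<lambda>w. J (S w) w) u"
  define B where "B = bouligand S u"
  have "B \<noteq> {}"
    unfolding B_def using S_lip S_dir by (rule bouligand_nonempty)
  obtain L where L: "\<And>W h. W \<in> B \<Longrightarrow> norm (W *v h) \<le> L * norm h"
    unfolding B_def using bouligand_bounded[OF S_lip] by blast
  have S_cont: "continuous_on UNIV S"
    using S_lip by (rule locally_lipschitz_continuous_on)
  have "\<And>W h. W \<in> B \<Longrightarrow>
      ereal (gy (S u) u \<bullet> (W *v h) + gu (S u) u \<bullet> h) \<le> clarke_dd (\<lambda>w. J (S w) w) u h"
    unfolding B_def by (rule bouligand_le_clarke_dd[OF J_deriv gy_cont gu_cont S_cont])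
  then obtain d c where "norm d = 1" "c > 0"
    and descent: "\<And>W. W \<in> B \<Longrightarrow> gy (S u) u \<bullet> (W *v d) + gu (S u) u \<bullet> d \<le> - c"
    using clarke_descent_direction[OF not_stationary \<open>B \<noteq> {}\<close>] by blast
  have "\<And>W. W \<in> B \<Longrightarrow> norm (W *v d) \<le> L"
    using L \<open>norm d = 1\<close> by (metis mult.right_neutral)
  moreover have "(\<lambda>k. SUP M\<in>G (uk k) (\<Delta>k k). infdist M B) \<longlonglongrightarrow> 0"
    using G2[OF uk_pos uk_lim \<Delta>k_lim not_stationary] \<open>B \<noteq> {}\<close>
    by (simp add: B_def infdist_notempty dist_norm)
  ultimately have "c \<le> 0"
    using G_ne G_bdd uk_pos
    by (intro model_psi_limit_ge[OF gy_cont gu_cont S_cont _ _ \<open>B \<noteq> {}\<close> _ descent \<open>norm d = 1\<close> uk_lim _ psi_lim])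
      simp_all
  with \<open>c > 0\<close> show False
    by simp
qed

end
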